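(* Let $M$ be an interpretation and $\varphi$ an $\mathcal{ALC}$-formula. Then $\mathrm{Mod}(\varphi)\setminus[M]_\varphi=\mathrm{Mod}(\mathcal{C}(\varphi,M))$.
   Context: $\mathcal{ALC}$ concepts: $C::=A\mid\neg C\mid(C\sqcap C)\mid\exists r.C$. $\mathcal{ALC}$-formulae: $\phi::=\alpha\mid\neg\phi\mid(\phi\wedge\phi)$, atomic $\alpha::=C(a)\mid r(a,b)\mid(C=\top)$; $\neg\neg\psi$ identified with $\psi$; $\vee,\bot$ usual abbreviations. A literal is an atomic formula or its negation. Interpretations: countable nonempty domain, standard semantics; $\mathrm{Mod}(\varphi)$: interpretations satisfying $\varphi$. $\mathrm{Sub}(\alpha)=\mathrm{Sub}(\neg\alpha)=\{\alpha,\neg\alpha\}$ for atomic $\alpha$; $\mathrm{Sub}(\psi\wedge\psi')=\mathrm{Sub}(\neg(\psi\wedge\psi'))=\{\psi\wedge\psi',\neg(\psi\wedge\psi')\}\cup\mathrm{Sub}(\psi)\cup\mathrm{Sub}(\psi')$. $\mathrm{con}(\varphi)$: smallest set of concepts containing $C$ whenever $(C=\top)$ or $C(a)$ is in $\mathrm{Sub}(\varphi)$, closed under subconcepts of $\sqcap$, $\exists r.\cdot$, and single negation. $\mathrm{ind}(\varphi)$: individual names in $\varphi$. Concept type: $c\subseteq\mathrm{con}(\varphi)$ with $D\in c$ iff $\neg D\notin c$, $D\sqcap E\in c$ iff $\{D,E\}\subseteq c$. Formula type for $\varphi$: $f\subseteq\mathrm{Sub}(\varphi)$ with $\psi\in f$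 iff $\neg\psi\notin f$, $\psi\wedge\psi'\in f$ iff $\{\psi,\psi'\}\subseteq f$. Model candidate $(T,o,f)$: $T$ set of concept types, $o:\mathrm{ind}(\varphi)\to T$, $f$ formula type with $\varphi\in f$, $C(a)\in f\Rightarrow C\in o(a)$, $r(a,b)\in f\Rightarrow\{\neg C\mid\neg\exists r.C\in o(a)\}\subseteq o(b)$. Quasimodel: model candidate where each $\exists r.D\in c\in T$ has $c'\in T$ with $\{D\}\cup\{\neg E\mid\neg\exists r.E\in c\}\subseteq c'$; $\neg C\in c\in T$ implies $(C=\top)\notin f$; $\neg(C=\top)\in f$ implies some $c\in T$ has $C\notin c$; $T\ne\emptyset$. $\mathrm{ftypes}(\varphi)=\{f\mid(T,o,f)$ quasimodel for $\varphi\}$. $\mathrm{qm}(\varphi,I)=(T,o,f)$ with $T=\{c(x)\mid x\in\Delta^I\}$, $c(x)=\{C\in\mathrm{con}(\varphi)\mid x\in C^I\}$, $o(a)=c(a^I)$, $f=\{\psi\in\mathrm{Sub}(\varphi)\mid I\models\psi\}$. $\mathrm{lit}(f)$: literals in $f$. $\mathrm{qfilter}(\varphi,M)=\mathrm{ftypes}(\varphi)\setminus\{f\}$ where $\mathrm{qm}(\varphi,M)=(T,o,f)$. $\mathcal{C}(\varphi,M)=\bigvee_{f\in\mathrm{qfilter}(\varphi,M)}\bigwedge\mathrm{lit}(f)$ if $M\models\varphi$ and $\mathrm{qfilter}(\varphi,M)\ne\emptyset$; $\bot$ if $M\models\varphi$ and $\mathrm{qfilter}(\varphi,M)=\emptyset$;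 $\varphi$ otherwise. $\mathcal{L}_{lit}(\varphi)$: Boolean combinations of atomic formulae occurring in $\varphi$; $M'\equiv_\varphi M$ iff they satisfy the same formulae of $\mathcal{L}_{lit}(\varphi)$; $[M]_\varphi=\{M'\mid M'\equiv_\varphi M\}$. *)

theory Defs
  imports Main "HOL-Library.Countable_Set"
begin

datatype ('c, 'r) concept =
    CName 'c
  | CNeg "('c, 'r) concept"
  | CAnd "('c, 'r) concept" "('c, 'r) concept"
  | CEx 'r "('c, 'r) concept"

datatype ('c, 'r, 'i) atom =
    CAs "('c, 'r) concept" 'i
  | RAs 'r 'i 'i
  | CEq "('c, 'r) concept"         (* C = top *)

datatype ('c, 'r, 'i) formula =
    Atom "('c, 'r, 'i) atom"
  | Neg "('c, 'r, 'i) formula"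
  | Conj "('c, 'r, 'i) formula" "('c, 'r, 'i) formula"

text \<open>Single negation modulo the identification of double negations.\<close>
fun cneg :: "('c, 'r) concept \<Rightarrow> ('c, 'r) concept" where
  "cneg (CNeg C) = C"
| "cneg C = CNeg C"

fun neg :: "('c, 'r, 'i) formula \<Rightarrow> ('c, 'r, 'i) formula" where
  "neg (Neg \<psi>) = \<psi>"
| "neg \<psi> = Neg \<psi>"

definition Disj :: "('c, 'r, 'i) formula \<Rightarrow> ('c, 'r, 'i) formula \<Rightarrow> ('c, 'r, 'i) formula" where
  "Disj \<psi> \<chi> = Neg (Conj (Neg \<psi>) (Neg \<chi>))"

definition Bot :: "('c, 'r, 'i) formula" where
  "Bot = Conj (Atom (CEq (CName undefined))) (Neg (Atom (CEq (CName undefined))))"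

definition Top :: "('c, 'r, 'i) formula" where
  "Top = Neg Bot"

text \<open>A fixed enumeration of a finite set (any enumeration will do).\<close>
definition enum_set :: "'a set \<Rightarrow> 'a list" where
  "enum_set S = (SOME xs. set xs = S \<and> distinct xs)"

definition BigConj :: "('c, 'r, 'i) formula set \<Rightarrow> ('c, 'r, 'i) formula" where
  "BigConj S = foldr Conj (enum_set S) Top"

definition BigDisj :: "('c, 'r, 'i) formula set \<Rightarrow> ('c, 'r, 'i) formula" where
  "BigDisj S = foldr Disj (enum_set S) Bot"

record ('c, 'r, 'i, 'd) interp =
  idom :: "'d set"
  cint :: "'c \<Rightarrow> 'd set"
  rint :: "'r \<Rightarrow> ('d \<times> 'd) set"
  iint :: "'i \<Rightarrow> 'd"

definition wf_interp :: "('c, 'r, 'i, 'd) interp \<Rightarrow> bool" where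
  "wf_interp I \<longleftrightarrow> idom I \<noteq> {} \<and> countable (idom I)
     \<and> (\<forall>A. cint I A \<subseteq> idom I) \<and> (\<forall>r. rint I r \<subseteq> idom I \<times> idom I)
     \<and> (\<forall>a. iint I a \<in> idom I)"

fun csem :: "('c, 'r, 'i, 'd) interp \<Rightarrow> ('c, 'r) concept \<Rightarrow> 'd set" where
  "csem I (CName A) = cint I A"
| "csem I (CNeg C) = idom I - csem I C"
| "csem I (CAnd C D) = csem I C \<inter> csem I D"
| "csem I (CEx r C) = {x \<in> idom I. \<exists>y. (x, y) \<in> rint I r \<and> y \<in> csem I C}"

fun asat :: "('c, 'r, 'i, 'd) interp \<Rightarrow> ('c, 'r, 'i) atom \<Rightarrow> bool" where
  "asat I (CAs C a) \<longleftrightarrow> iint I a \<in> csem I C"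
| "asat I (RAs r a b) \<longleftrightarrow> (iint I a, iint I b) \<in> rint I r"
| "asat I (CEq C) \<longleftrightarrow> csem I C = idom I"

fun fsat :: "('c, 'r, 'i, 'd) interp \<Rightarrow> ('c, 'r, 'i) formula \<Rightarrow> bool" where
  "fsat I (Atom \<alpha>) = asat I \<alpha>"
| "fsat I (Neg \<psi>) = (\<not> fsat I \<psi>)"
| "fsat I (Conj \<psi> \<chi>) = (fsat I \<psi> \<and> fsat I \<chi>)"

definition Mod :: "('c, 'r, 'i) formula \<Rightarrow> ('c, 'r, 'i, 'd) interp set" where
  "Mod \<phi> = {I. wf_interp I \<and> fsat I \<phi>}"

fun Sub :: "('c, 'r, 'i) formula \<Rightarrow> ('c, 'r, 'i) formula set" where
  "Sub (Atom \<alpha>) = {Atom \<alpha>, Neg (Atom \<alpha>)}"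
| "Sub (Conj \<psi> \<chi>) = {Conj \<psi> \<chi>, Neg (Conj \<psi> \<chi>)} \<union> Sub \<psi> \<union> Sub \<chi>"
| "Sub (Neg \<psi>) = {Neg \<psi>, neg (Neg \<psi>)} \<union> Sub \<psi>"

inductive_set con :: "('c, 'r, 'i) formula \<Rightarrow> ('c, 'r) concept set" for \<phi> where
  con_eq: "Atom (CEq C) \<in> Sub \<phi> \<Longrightarrow> C \<in> con \<phi>"
| con_as: "Atom (CAs C a) \<in> Sub \<phi> \<Longrightarrow> C \<in> con \<phi>"
| con_and1: "CAnd C D \<in> con \<phi> \<Longrightarrow> C \<in> con \<phi>"
| con_and2: "CAnd C D \<in> con \<phi> \<Longrightarrow> D \<in> con \<phi>"
| con_ex: "CEx r C \<in> con \<phi> \<Longrightarrow> C \<in> con \<phi>"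
| con_neg: "C \<in> con \<phi> \<Longrightarrow> cneg C \<in> con \<phi>"

fun atom_inds :: "('c, 'r, 'i) atom \<Rightarrow> 'i set" where
  "atom_inds (CAs C a) = {a}"
| "atom_inds (RAs r a b) = {a, b}"
| "atom_inds (CEq C) = {}"

fun atoms :: "('c, 'r, 'i) formula \<Rightarrow> ('c, 'r, 'i) atom set" where
  "atoms (Atom \<alpha>) = {\<alpha>}"
| "atoms (Neg \<psi>) = atoms \<psi>"
| "atoms (Conj \<psi> \<chi>) = atoms \<psi> \<union> atoms \<chi>"

definition ind :: "('c, 'r, 'i) formula \<Rightarrow> 'i set" where
  "ind \<phi> = (\<Union>\<alpha>\<in>atoms \<phi>. atom_inds \<alpha>)"

definition concept_type :: "('c, 'r, 'i) formula \<Rightarrow> ('c, 'r) concept set \<Rightarrow> bool" where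
  "concept_type \<phi> c \<longleftrightarrow> c \<subseteq> con \<phi>
     \<and> (\<forall>D\<in>con \<phi>. D \<in> c \<longleftrightarrow> cneg D \<notin> c)
     \<and> (\<forall>D E. CAnd D E \<in> con \<phi> \<longrightarrow> (CAnd D E \<in> c \<longleftrightarrow> D \<in> c \<and> E \<in> c))"

definition formula_type :: "('c, 'r, 'i) formula \<Rightarrow> ('c, 'r, 'i) formula set \<Rightarrow> bool" where
  "formula_type \<phi> f \<longleftrightarrow> f \<subseteq> Sub \<phi>
     \<and> (\<forall>\<psi>\<in>Sub \<phi>. \<psi> \<in> f \<longleftrightarrow> neg \<psi> \<notin> f)
     \<and> (\<forall>\<psi> \<chi>. Conj \<psi> \<chi> \<in> Sub \<phi> \<longrightarrow> (Conj \<psi> \<chi> \<in> f \<longleftrightarrow> \<psi> \<in> f \<and> \<chi> \<in> f))"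

definition model_candidate ::
  "('c, 'r, 'i) formula \<Rightarrow> ('c, 'r) concept set set \<Rightarrow> ('i \<Rightarrow> ('c, 'r) concept set)
     \<Rightarrow> ('c, 'r, 'i) formula set \<Rightarrow> bool" where
  "model_candidate \<phi> T oo f \<longleftrightarrow>
     (\<forall>c\<in>T. concept_type \<phi> c)
     \<and> (\<forall>a\<in>ind \<phi>. oo a \<in> T)
     \<and> formula_type \<phi> f \<and> \<phi> \<in> f
     \<and> (\<forall>C a. Atom (CAs C a) \<in> f \<longrightarrow> C \<in> oo a)
     \<and> (\<forall>r a b. Atom (RAs r a b) \<in> f \<longrightarrow>
          {cneg C | C. CNeg (CEx r C) \<in> oo a} \<subseteq> oo b)"

definition quasimodel ::
  "('c, 'r, 'i) formula \<Rightarrow> ('c, 'r) concept set set \<Rightarrow> ('i \<Rightarrow> ('c, 'r) concept set)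
     \<Rightarrow> ('c, 'r, 'i) formula set \<Rightarrow> bool" where
  "quasimodel \<phi> T oo f \<longleftrightarrow> model_candidate \<phi> T oo f
     \<and> (\<forall>c\<in>T. \<forall>r D. CEx r D \<in> c \<longrightarrow>
          (\<exists>c'\<in>T. {D} \<union> {cneg E | E. CNeg (CEx r E) \<in> c} \<subseteq> c'))
     \<and> (\<forall>c\<in>T. \<forall>C. cneg C \<in> c \<longrightarrow> Atom (CEq C) \<notin> f)
     \<and> (\<forall>C. Neg (Atom (CEq C)) \<in> f \<longrightarrow> (\<exists>c\<in>T. C \<notin> c))
     \<and> T \<noteq> {}"

definition ftypes :: "('c, 'r, 'i) formula \<Rightarrow> ('c, 'r, 'i) formula set set" where
  "ftypes \<phi> = {f. \<exists>T oo. quasimodel \<phi> T oo f}"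

definition ctype_of :: "('c, 'r, 'i) formula \<Rightarrow> ('c, 'r, 'i, 'd) interp \<Rightarrow> 'd \<Rightarrow> ('c, 'r) concept set" where
  "ctype_of \<phi> I x = {C \<in> con \<phi>. x \<in> csem I C}"

definition qm :: "('c, 'r, 'i) formula \<Rightarrow> ('c, 'r, 'i, 'd) interp
     \<Rightarrow> ('c, 'r) concept set set \<times> ('i \<Rightarrow> ('c, 'r) concept set) \<times> ('c, 'r, 'i) formula set" where
  "qm \<phi> I = (ctype_of \<phi> I ` idom I,
              (\<lambda>a. ctype_of \<phi> I (iint I a)),
              {\<psi> \<in> Sub \<phi>. fsat I \<psi>})"

fun is_literal :: "('c, 'r, 'i) formula \<Rightarrow> bool" where
  "is_literal (Atom \<alpha>) = True"
| "is_literal (Neg (Atom \<alpha>)) = True"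
| "is_literal _ = False"

definition lit :: "('c, 'r, 'i) formula set \<Rightarrow> ('c, 'r, 'i) formula set" where
  "lit f = {\<psi> \<in> f. is_literal \<psi>}"

definition qfilter :: "('c, 'r, 'i) formula \<Rightarrow> ('c, 'r, 'i, 'd) interp \<Rightarrow> ('c, 'r, 'i) formula set set" where
  "qfilter \<phi> M = ftypes \<phi> - {snd (snd (qm \<phi> M))}"

definition Cform :: "('c, 'r, 'i) formula \<Rightarrow> ('c, 'r, 'i, 'd) interp \<Rightarrow> ('c, 'r, 'i) formula" where
  "Cform \<phi> M =
     (if fsat M \<phi> then
        (if qfilter \<phi> M \<noteq> {} then BigDisj ((\<lambda>f. BigConj (lit f)) ` qfilter \<phi> M) else Bot)
      else \<phi>)"

definition L_lit :: "('c, 'r, 'i) formula \<Rightarrow> ('c, 'r, 'i) formula set" where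
  "L_lit \<phi> = {\<psi>. atoms \<psi> \<subseteq> atoms \<phi>}"

definition lit_equiv :: "('c, 'r, 'i) formula \<Rightarrow> ('c, 'r, 'i, 'd) interp \<Rightarrow> ('c, 'r, 'i, 'd) interp \<Rightarrow> bool" where
  "lit_equiv \<phi> M' M \<longleftrightarrow> (\<forall>\<psi>\<in>L_lit \<phi>. fsat M' \<psi> \<longleftrightarrow> fsat M \<psi>)"

definition eq_class :: "('c, 'r, 'i) formula \<Rightarrow> ('c, 'r, 'i, 'd) interp \<Rightarrow> ('c, 'r, 'i, 'd) interp set" where
  "eq_class \<phi> M = {M'. wf_interp M' \<and> lit_equiv \<phi> M' M}"

end

theory Submission
  imports Defs
begin

text \<open>
  A formula type is determined by its literals: an interpretation satisfying all literals of a
  formula type \<open>f\<close> satisfies exactly the subformulas in \<open>f\<close>.  Hence the disjunct \<open>\<And>lit(f)\<close> of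
  \<open>C(\<phi>, M)\<close> holds in \<open>M'\<close> iff \<open>f\<close> is the formula type realised by \<open>M'\<close>.  The formula type
  realised by a model \<open>I\<close> of \<open>\<phi>\<close> belongs to \<open>ftypes(\<phi>)\<close>, since \<open>qm(\<phi>, I)\<close> is a quasimodel,
  and two interpretations are \<open>\<equiv>\<^sub>\<phi>\<close>-equivalent iff they realise the same formula type.  So the
  models of \<open>C(\<phi>, M)\<close> are the models of \<open>\<phi>\<close> realising a formula type other than that of \<open>M\<close>.
\<close>

lemma fsat_neg [simp]: "fsat I (neg \<psi>) \<longleftrightarrow> \<not> fsat I \<psi>"
  by (cases \<psi>) auto

lemma fsat_Bot [simp]: "\<not> fsat I Bot"
  by (simp add: Bot_def)

lemma fsat_Top [simp]: "fsat I Top"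
  by (simp add: Top_def)

lemma set_enum_set: "finite S \<Longrightarrow> set (enum_set S) = S"
  unfolding enum_set_def by (metis (mono_tags, lifting) finite_distinct_list someI_ex)

lemma fsat_BigConj: "finite S \<Longrightarrow> fsat I (BigConj S) \<longleftrightarrow> (\<forall>\<psi>\<in>S. fsat I \<psi>)"
proof -
  have "fsat I (foldr Conj xs Top) \<longleftrightarrow> (\<forall>\<psi>\<in>set xs. fsat I \<psi>)" for xs
    by (induction xs) auto
  then show "finite S \<Longrightarrow> ?thesis"
    unfolding BigConj_def by (metis set_enum_set)
qed

lemma fsat_BigDisj: "finite S \<Longrightarrow> fsat I (BigDisj S) \<longleftrightarrow> (\<exists>\<psi>\<in>S. fsat I \<psi>)"
proof -
  have "fsat I (foldr Disj xs Bot) \<longleftrightarrow> (\<exists>\<psi>\<in>set xs. fsat I \<psi>)" for xs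
    by (induction xs) (auto simp: Disj_def)
  then show "finite S \<Longrightarrow> ?thesis"
    unfolding BigDisj_def by (metis set_enum_set)
qed

lemma Sub_self: "\<psi> \<in> Sub \<psi>"
  by (cases \<psi>) auto

lemma neg_in_Sub: "\<chi> \<in> Sub \<phi> \<Longrightarrow> neg \<chi> \<in> Sub \<phi>"
  by (induction \<phi> arbitrary: \<chi>) (auto simp: Sub_self)

lemma Sub_mono: "\<chi> \<in> Sub \<phi> \<Longrightarrow> Sub \<chi> \<subseteq> Sub \<phi>"
  by (induction \<phi> arbitrary: \<chi>) auto

lemma Conj_in_SubD: "Conj \<psi> \<chi> \<in> Sub \<phi> \<Longrightarrow> \<psi> \<in> Sub \<phi> \<and> \<chi> \<in> Sub \<phi>"
  using Sub_mono[of "Conj \<psi> \<chi>" \<phi>] Sub_self[of \<psi>] Sub_self[of \<chi>] by auto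

lemma Neg_in_SubD: "Neg \<psi> \<in> Sub \<phi> \<Longrightarrow> \<psi> \<in> Sub \<phi>"
  using Sub_mono[of "Neg \<psi>" \<phi>] Sub_self[of \<psi>] by auto

lemma finite_Sub: "finite (Sub \<phi>)"
  by (induction \<phi>) auto

lemma atoms_subset_if_in_Sub: "\<psi> \<in> Sub \<phi> \<Longrightarrow> atoms \<psi> \<subseteq> atoms \<phi>"
  by (induction \<phi> arbitrary: \<psi>) auto

lemma Atom_in_Sub: "\<alpha> \<in> atoms \<phi> \<Longrightarrow> Atom \<alpha> \<in> Sub \<phi>"
  by (induction \<phi>) auto

lemma fsat_cong_atoms:
  assumes "\<forall>\<alpha>\<in>atoms \<psi>. asat M' \<alpha> \<longleftrightarrow> asat M \<alpha>"
  shows "fsat M' \<psi> \<longleftrightarrow> fsat M \<psi>"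
  using assms by (induction \<psi>) auto

lemma csem_subset_idom: "wf_interp I \<Longrightarrow> csem I C \<subseteq> idom I"
  by (induction C) (auto simp: wf_interp_def)

lemma csem_cneg:
  "wf_interp I \<Longrightarrow> x \<in> idom I \<Longrightarrow> x \<in> csem I (cneg C) \<longleftrightarrow> x \<notin> csem I C"
  using csem_subset_idom by (cases C) auto

lemma cneg_in_con_if_CNeg_CEx:
  assumes "CNeg (CEx r E) \<in> con \<phi>"
  shows "cneg E \<in> con \<phi>"
proof -
  have "CEx r E \<in> con \<phi>"
    using con_neg[OF assms] by simp
  then show ?thesis
    by (rule con_neg[OF con_ex])
qed

definition ftype_of :: "('c, 'r, 'i) formula \<Rightarrow> ('c, 'r, 'i, 'd) interp \<Rightarrow> ('c, 'r, 'i) formula set"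
  where "ftype_of \<phi> I = {\<psi> \<in> Sub \<phi>. fsat I \<psi>}"

lemma snd_snd_qm: "snd (snd (qm \<phi> I)) = ftype_of \<phi> I"
  by (simp add: qm_def ftype_of_def)

lemma concept_type_ctype_of:
  assumes "wf_interp I" "x \<in> idom I"
  shows "concept_type \<phi> (ctype_of \<phi> I x)"
  unfolding concept_type_def
proof (intro conjI ballI allI impI)
  show "ctype_of \<phi> I x \<subseteq> con \<phi>"
    unfolding ctype_of_def by auto
next
  fix D assume "D \<in> con \<phi>"
  then show "D \<in> ctype_of \<phi> I x \<longleftrightarrow> cneg D \<notin> ctype_of \<phi> I x"
    using con_neg[OF \<open>D \<in> con \<phi>\<close>] csem_cneg[OF assms, of D] by (simp add: ctype_of_def)
next
  fix D E assume "CAnd D E \<in> con \<phi>"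
  then show "CAnd D E \<in> ctype_of \<phi> I x \<longleftrightarrow> D \<in> ctype_of \<phi> I x \<and> E \<in> ctype_of \<phi> I x"
    using con_and1 con_and2 unfolding ctype_of_def by auto
qed

lemma formula_type_ftype_of: "formula_type \<phi> (ftype_of \<phi> I)"
  unfolding formula_type_def ftype_of_def
  using neg_in_Sub by (auto dest: Conj_in_SubD)

lemma model_candidate_qm:
  assumes wf: "wf_interp I" and sat: "fsat I \<phi>"
  shows "model_candidate \<phi> (ctype_of \<phi> I ` idom I) (\<lambda>a. ctype_of \<phi> I (iint I a)) (ftype_of \<phi> I)"
  unfolding model_candidate_def
proof (intro conjI allI impI ballI)
  have iint_in: "iint I a \<in> idom I" for a
    using wf by (simp add: wf_interp_def)
  show "concept_type \<phi> c" if "c \<in> ctype_of \<phi> I ` idom I" for c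
    using that concept_type_ctype_of[OF wf] by auto
  show "ctype_of \<phi> I (iint I a) \<in> ctype_of \<phi> I ` idom I" for a
    using iint_in by auto
  show "formula_type \<phi> (ftype_of \<phi> I)"
    by (rule formula_type_ftype_of)
  show "\<phi> \<in> ftype_of \<phi> I"
    using sat Sub_self by (auto simp: ftype_of_def)
  show "C \<in> ctype_of \<phi> I (iint I a)" if "Atom (CAs C a) \<in> ftype_of \<phi> I" for C a
    using that con_as by (auto simp: ctype_of_def ftype_of_def)
  show "{cneg C |C. CNeg (CEx r C) \<in> ctype_of \<phi> I (iint I a)} \<subseteq> ctype_of \<phi> I (iint I b)"
    if "Atom (RAs r a b) \<in> ftype_of \<phi> I" for r a b
  proof clarify
    fix C assume C: "CNeg (CEx r C) \<in> ctype_of \<phi> I (iint I a)"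
    have "(iint I a, iint I b) \<in> rint I r"
      using that by (simp add: ftype_of_def)
    with C iint_in[of a] have "iint I b \<notin> csem I C"
      by (auto simp: ctype_of_def)
    then show "cneg C \<in> ctype_of \<phi> I (iint I b)"
      using C csem_cneg[OF wf iint_in] cneg_in_con_if_CNeg_CEx
      by (auto simp: ctype_of_def)
  qed
qed

lemma quasimodel_qm:
  assumes wf: "wf_interp I" and sat: "fsat I \<phi>"
  shows "quasimodel \<phi> (ctype_of \<phi> I ` idom I) (\<lambda>a. ctype_of \<phi> I (iint I a)) (ftype_of \<phi> I)"
  unfolding quasimodel_def
proof (intro conjI ballI allI impI)
  show "model_candidate \<phi> (ctype_of \<phi> I ` idom I) (\<lambda>a. ctype_of \<phi> I (iint I a)) (ftype_of \<phi> I)"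
    using wf sat by (rule model_candidate_qm)
next
  fix c r D assume "c \<in> ctype_of \<phi> I ` idom I" and ex: "CEx r D \<in> c"
  then obtain x where x: "x \<in> idom I" "c = ctype_of \<phi> I x"
    by auto
  with ex obtain y where y: "(x, y) \<in> rint I r" "y \<in> csem I D" "CEx r D \<in> con \<phi>"
    by (auto simp: ctype_of_def)
  have "y \<in> idom I"
    using wf y(1) by (auto simp: wf_interp_def)
  moreover have "{D} \<union> {cneg E |E. CNeg (CEx r E) \<in> c} \<subseteq> ctype_of \<phi> I y"
    using x y \<open>y \<in> idom I\<close> cneg_in_con_if_CNeg_CEx csem_cneg[OF wf \<open>y \<in> idom I\<close>] con_ex
    by (auto simp: ctype_of_def)
  ultimately show "\<exists>c'\<in>ctype_of \<phi> I ` idom I. {D} \<union> {cneg E |E. CNeg (CEx r E) \<in> c} \<subseteq> c'"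
    by auto
next
  fix c C assume "c \<in> ctype_of \<phi> I ` idom I" and "cneg C \<in> c"
  then show "Atom (CEq C) \<notin> ftype_of \<phi> I"
    using csem_cneg[OF wf] by (auto simp: ctype_of_def ftype_of_def)
next
  fix C assume "Neg (Atom (CEq C)) \<in> ftype_of \<phi> I"
  then obtain x where "x \<in> idom I" "x \<notin> csem I C"
    using csem_subset_idom[OF wf, of C] by (auto simp: ftype_of_def)
  then show "\<exists>c\<in>ctype_of \<phi> I ` idom I. C \<notin> c"
    by (auto simp: ctype_of_def)
next
  show "ctype_of \<phi> I ` idom I \<noteq> {}"
    using wf by (simp add: wf_interp_def)
qed

lemma ftype_of_in_ftypes_iff:
  assumes "wf_interp I"
  shows "ftype_of \<phi> I \<in> ftypes \<phi> \<longleftrightarrow> fsat I \<phi>"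
proof
  assume "ftype_of \<phi> I \<in> ftypes \<phi>"
  then have "\<phi> \<in> ftype_of \<phi> I"
    by (auto simp: ftypes_def quasimodel_def model_candidate_def)
  then show "fsat I \<phi>"
    by (simp add: ftype_of_def)
next
  assume "fsat I \<phi>"
  then show "ftype_of \<phi> I \<in> ftypes \<phi>"
    unfolding ftypes_def using quasimodel_qm[OF assms] by blast
qed

lemma ftypes_subset_formula_types: "ftypes \<phi> \<subseteq> Collect (formula_type \<phi>)"
  by (auto simp: ftypes_def quasimodel_def model_candidate_def)

lemma finite_formula_types: "finite (Collect (formula_type \<phi>))"
  using finite_Sub[of \<phi>] by (rule rev_finite_subset[OF finite_Pow_iff[THEN iffD2]])
    (auto simp: formula_type_def)

lemma finite_lit_if_formula_type: "formula_type \<phi> f \<Longrightarrow> finite (lit f)"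
  using finite_Sub[of \<phi>] by (rule rev_finite_subset) (auto simp: formula_type_def lit_def)

lemma formula_type_eq_ftype_of_if_fsat_lit:
  assumes f: "formula_type \<phi> f" and lits: "\<forall>\<psi>\<in>lit f. fsat I \<psi>"
  shows "f = ftype_of \<phi> I"
proof -
  have "\<psi> \<in> f \<longleftrightarrow> fsat I \<psi>" if "\<psi> \<in> Sub \<phi>" for \<psi>
    using that
  proof (induction \<psi>)
    case (Atom \<alpha>)
    then have "Atom \<alpha> \<in> f \<longleftrightarrow> Neg (Atom \<alpha>) \<notin> f"
      using f by (simp add: formula_type_def)
    then show ?case
      using lits by (auto simp: lit_def)
  next
    case (Neg \<psi>)
    then have "Neg \<psi> \<in> f \<longleftrightarrow> \<psi> \<notin> f"
      using f by (auto simp: formula_type_def)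
    then show ?case
      using Neg.IH[OF Neg_in_SubD[OF Neg.prems]] by simp
  next
    case (Conj \<psi> \<chi>)
    then have "Conj \<psi> \<chi> \<in> f \<longleftrightarrow> \<psi> \<in> f \<and> \<chi> \<in> f"
      using f unfolding formula_type_def by blast
    then show ?case
      using Conj.IH Conj_in_SubD[OF Conj.prems] by simp
  qed
  moreover have "f \<subseteq> Sub \<phi>"
    using f by (simp add: formula_type_def)
  ultimately show ?thesis
    by (auto simp: ftype_of_def)
qed

lemma fsat_BigDisj_lit_iff:
  assumes "F \<subseteq> Collect (formula_type \<phi>)"
  shows "fsat I (BigDisj ((\<lambda>f. BigConj (lit f)) ` F)) \<longleftrightarrow> ftype_of \<phi> I \<in> F"
proof -
  have fin: "finite F"
    using assms finite_formula_types by (rule finite_subset)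
  have "fsat I (BigConj (lit f)) \<longleftrightarrow> f = ftype_of \<phi> I" if "f \<in> F" for f
  proof -
    have f: "formula_type \<phi> f"
      using that assms by blast
    then have "fsat I (BigConj (lit f)) \<longleftrightarrow> (\<forall>\<psi>\<in>lit f. fsat I \<psi>)"
      by (simp add: fsat_BigConj finite_lit_if_formula_type)
    moreover have "\<forall>\<psi>\<in>lit (ftype_of \<phi> I). fsat I \<psi>"
      by (simp add: lit_def ftype_of_def)
    ultimately show ?thesis
      using formula_type_eq_ftype_of_if_fsat_lit[OF f] by blast
  qed
  then show ?thesis
    using fin by (auto simp: fsat_BigDisj)
qed

lemma lit_equiv_iff_ftype_of_eq: "lit_equiv \<phi> M' M \<longleftrightarrow> ftype_of \<phi> M' = ftype_of \<phi> M"
proof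
  assume "lit_equiv \<phi> M' M"
  then show "ftype_of \<phi> M' = ftype_of \<phi> M"
    using atoms_subset_if_in_Sub by (auto simp: lit_equiv_def L_lit_def ftype_of_def)
next
  assume eq: "ftype_of \<phi> M' = ftype_of \<phi> M"
  have "asat M' \<alpha> \<longleftrightarrow> asat M \<alpha>" if "\<alpha> \<in> atoms \<phi>" for \<alpha>
    using eq[unfolded ftype_of_def set_eq_iff, rule_format, of "Atom \<alpha>"] Atom_in_Sub[OF that]
    by simp
  then show "lit_equiv \<phi> M' M"
    unfolding lit_equiv_def L_lit_def using fsat_cong_atoms by blast
qed

theorem mainTheorem16:
  fixes M :: "('c, 'r, 'i, 'd) interp" and \<phi> :: "('c, 'r, 'i) formula"
  assumes "wf_interp M"
  shows "Mod \<phi> - eq_class \<phi> M = (Mod (Cform \<phi> M) :: ('c, 'r, 'i, 'd) interp set)"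
proof (cases "fsat M \<phi>")
  case False
  then have "Mod \<phi> \<inter> eq_class \<phi> M = {}"
    by (auto simp: Mod_def eq_class_def lit_equiv_def L_lit_def)
  with False show ?thesis
    by (auto simp: Cform_def)
next
  case True
  have qfilter: "qfilter \<phi> M = ftypes \<phi> - {ftype_of \<phi> M}"
    by (simp add: qfilter_def snd_snd_qm)
  then have qfilter_formula_types: "qfilter \<phi> M \<subseteq> Collect (formula_type \<phi>)"
    using ftypes_subset_formula_types by blast
  have Cform: "fsat M' (Cform \<phi> M) \<longleftrightarrow> ftype_of \<phi> M' \<in> qfilter \<phi> M"
    for M' :: "('c, 'r, 'i, 'd) interp"
    using True fsat_BigDisj_lit_iff[OF qfilter_formula_types, of M'] by (simp add: Cform_def)
  show ?thesis
  proof (rule set_eqI)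
    fix M' :: "('c, 'r, 'i, 'd) interp"
    have "M' \<in> Mod \<phi> - eq_class \<phi> M
        \<longleftrightarrow> wf_interp M' \<and> fsat M' \<phi> \<and> ftype_of \<phi> M' \<noteq> ftype_of \<phi> M"
      by (auto simp: Mod_def eq_class_def lit_equiv_iff_ftype_of_eq)
    also have "\<dots> \<longleftrightarrow> wf_interp M' \<and> ftype_of \<phi> M' \<in> qfilter \<phi> M"
      using ftype_of_in_ftypes_iff[of M' \<phi>] qfilter by blast
    also have "\<dots> \<longleftrightarrow> M' \<in> Mod (Cform \<phi> M)"
      by (simp add: Mod_def Cform)
    finally show "M' \<in> Mod \<phi> - eq_class \<phi> M \<longleftrightarrow> M' \<in> Mod (Cform \<phi> M)" .
  qed
qed

end
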